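(* Let $M_1,M_2$ be connected Bowditch boundaries of relatively hyperbolic pairs $(G_1,\mathbb{P}_1)$ and $(G_2,\mathbb{P}_2)$, and let $T(M_i)$ denote the exact cut pair/cut point tree of $M_i$. Each homeomorphism $f\colon M_1\to M_2$ induces a graph isomorphism $\hat f\colon T(M_1)\to T(M_2)$. Moreover, if $M_3$ is also such a boundary and $f_i\colon M_i\to M_{i+1}$ ($i=1,2$) are homeomorphisms, then $\widehat{f_2f_1}=\hat f_2\hat f_1$, and $\widehat{\mathrm{id}}=\mathrm{id}$.
   Context: Relatively hyperbolic pair $(G,\mathbb{P})$: $G$ finitely generated, $\mathbb{P}$ a finite family of finitely generated subgroups, such that the cusped space (Cayley graph of $G$ with respect to a finite generating set containing generators of each $P$, with a warped-product horoball $\Gamma_{gP}\times_{e^{-t}}[0,\infty)$ attached along each coset subgraph $\Gamma_{gP}$) is Gromov hyperbolic; its Gromov boundary is the Bowditch boundary $\partial(G,\mathbb{P})$. For a compact connected locally connected metrizable space $M$: a cut point is $\eta$ with $M\setminus\{\eta\}$ disconnected. A cut pair is a set of two distinct non-cut points $\{\zeta,\xi\}$ with $M\setminus\{\zeta,\xi\}$ disconnected. For a non-cut point $\zeta$, its valence is the number of ends of $M\setminus\{\zeta\}$. A cut pair $\{\zeta,\xi\}$ is exact if both points have valence equal to the number of components of $M\setminus\{\zeta,\xi\}$; it is inseparable if no other exact cut pair $\{a,b\}$ has $\zeta,\xi$ in distinct components of $M\setminus\{a,b\}$. Let $Z$ be the set of all cut points and inseparable exact cut pairs. Two points of $M\setminus\bigcup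 Z$ are equivalent if no element of $Z$ separates them; a piece is the closure of an equivalence class with at least two points, and $\Pi$ is the set of pieces. $T(M)$ is the bipartite graph with vertex set $Z\sqcup\Pi$, where $z\in Z$ and $\pi\in\Pi$ are adjacent iff $z\subseteq\pi$. *)

theory Defs
  imports "HOL-Analysis.Analysis" "HOL-Library.Extended_Nat"
begin

definition ecard :: "'x set \<Rightarrow> enat" where
  "ecard A = (if finite A then enat (card A) else \<infinity>)"

definition num_ends :: "'a topology \<Rightarrow> enat" where
  "num_ends Y = Sup {ecard {C \<in> connected_components_of (subtopology Y (topspace Y - K)).
                         \<not> compactin Y (Y closure_of C)} | K. compactin Y K}"

definition cut_point :: "'a topology \<Rightarrow> 'a \<Rightarrow> bool" where
  "cut_point X \<eta> \<longleftrightarrow> \<eta> \<in> topspace X \<and> \<not> connected_space (subtopology X (topspace X - {\<eta>}))"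

definition noncut_point :: "'a topology \<Rightarrow> 'a \<Rightarrow> bool" where
  "noncut_point X \<eta> \<longleftrightarrow> \<eta> \<in> topspace X \<and> \<not> cut_point X \<eta>"

definition cut_pair :: "'a topology \<Rightarrow> 'a set \<Rightarrow> bool" where
  "cut_pair X P \<longleftrightarrow> (\<exists>\<zeta> \<xi>. P = {\<zeta>, \<xi>} \<and> \<zeta> \<noteq> \<xi> \<and> noncut_point X \<zeta> \<and> noncut_point X \<xi>
       \<and> \<not> connected_space (subtopology X (topspace X - P)))"

definition valence :: "'a topology \<Rightarrow> 'a \<Rightarrow> enat" where
  "valence X \<zeta> = num_ends (subtopology X (topspace X - {\<zeta>}))"

definition exact_cut_pair :: "'a topology \<Rightarrow> 'a set \<Rightarrow> bool" where
  "exact_cut_pair X P \<longleftrightarrow> cut_pair X P \<and>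
     (\<forall>\<zeta>\<in>P. valence X \<zeta> = ecard (connected_components_of (subtopology X (topspace X - P))))"

definition separates :: "'a topology \<Rightarrow> 'a set \<Rightarrow> 'a \<Rightarrow> 'a \<Rightarrow> bool" where
  "separates X S a b \<longleftrightarrow> a \<in> topspace X - S \<and> b \<in> topspace X - S \<and>
     \<not> (\<exists>C\<in>connected_components_of (subtopology X (topspace X - S)). a \<in> C \<and> b \<in> C)"

definition inseparable_exact_cut_pair :: "'a topology \<Rightarrow> 'a set \<Rightarrow> bool" where
  "inseparable_exact_cut_pair X P \<longleftrightarrow> exact_cut_pair X P \<and>
     (\<forall>\<zeta> \<xi>. P = {\<zeta>, \<xi>} \<longrightarrow> \<not> (\<exists>Q. exact_cut_pair X Q \<and> Q \<noteq> P \<and> separates X Q \<zeta> \<xi>))"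

definition Zset :: "'a topology \<Rightarrow> 'a set set" where
  "Zset X = {{\<eta>} | \<eta>. cut_point X \<eta>} \<union> {P. inseparable_exact_cut_pair X P}"

definition piece_equiv :: "'a topology \<Rightarrow> 'a \<Rightarrow> 'a \<Rightarrow> bool" where
  "piece_equiv X x y \<longleftrightarrow> x \<in> topspace X - \<Union>(Zset X) \<and> y \<in> topspace X - \<Union>(Zset X) \<and>
     (\<forall>z\<in>Zset X. \<not> separates X z x y)"

definition pieces :: "'a topology \<Rightarrow> 'a set set" where
  "pieces X = {X closure_of E | E. (\<exists>x. E = {y. piece_equiv X x y} \<and> piece_equiv X x x)
                                  \<and> (\<exists>a b. a \<in> E \<and> b \<in> E \<and> a \<noteq> b)}"

definition T_vertices :: "'a topology \<Rightarrow> ('a set + 'a set) set" where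
  "T_vertices X = Inl ` Zset X \<union> Inr ` pieces X"

definition T_adj :: "'a topology \<Rightarrow> ('a set + 'a set) \<Rightarrow> ('a set + 'a set) \<Rightarrow> bool" where
  "T_adj X u v \<longleftrightarrow> u \<in> T_vertices X \<and> v \<in> T_vertices X \<and>
     ((\<exists>z p. u = Inl z \<and> v = Inr p \<and> z \<subseteq> p) \<or> (\<exists>z p. u = Inr p \<and> v = Inl z \<and> z \<subseteq> p))"

definition T_map :: "('a \<Rightarrow> 'b) \<Rightarrow> ('a set + 'a set) \<Rightarrow> ('b set + 'b set)" where
  "T_map f v = (case v of Inl z \<Rightarrow> Inl (f ` z) | Inr p \<Rightarrow> Inr (f ` p))"

definition T_graph_iso :: "'a topology \<Rightarrow> 'b topology \<Rightarrow> (('a set + 'a set) \<Rightarrow> ('b set + 'b set)) \<Rightarrow> bool" where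
  "T_graph_iso X Y h \<longleftrightarrow> bij_betw h (T_vertices X) (T_vertices Y) \<and>
     (\<forall>u\<in>T_vertices X. \<forall>v\<in>T_vertices X. T_adj X u v \<longleftrightarrow> T_adj Y (h u) (h v))"

text \<open>Topological properties of a connected Bowditch boundary used by the paper.\<close>
definition boundary_like :: "'a topology \<Rightarrow> bool" where
  "boundary_like X \<longleftrightarrow> compact_space X \<and> connected_space X \<and> locally_connected_space X
     \<and> metrizable_space X"

end

(* Every ingredient of T(M) is defined from the topology alone: cut points and non-cut
   points, the components of the complement of a set, the number of ends and hence the
   valence, separation, and therefore the inseparable exact cut pairs, the piece
   equivalence and the pieces. So a homeomorphism f carries each of these objects of M1
   onto the corresponding object of M2, giving Z(M2) = f(Z(M1)) and the same for pieces,
   and, being injective, f preserves and reflects the inclusions z <= pi that are the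
   edges. Where only one implication is direct (inseparability quantifies over all exact
   cut pairs of the target), the converse is that implication for the inverse
   homeomorphism. *)

theory Submission
  imports Defs
begin

abbreviation complement_components :: "'a topology \<Rightarrow> 'a set \<Rightarrow> 'a set set" where
  "complement_components X S \<equiv> connected_components_of (subtopology X (topspace X - S))"

lemma complement_components_subset_topspace:
  "C \<in> complement_components X S \<Longrightarrow> C \<subseteq> topspace X"
  by (drule connected_components_of_subset) simp

lemma homeomorphic_map_inverse:
  assumes "homeomorphic_map X Y f"
  obtains g where "homeomorphic_maps X Y f g" and "homeomorphic_map Y X g"
proof -
  obtain g where fg: "homeomorphic_maps X Y f g"
    using assms homeomorphic_map_maps by blast
  then have "homeomorphic_map Y X g" by (simp add: homeomorphic_maps_map)
  with fg show thesis by (rule that)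
qed

lemma homeomorphic_maps_image_inverse:
  assumes "homeomorphic_maps X Y f g" and "S \<subseteq> topspace X"
  shows "g ` f ` S = S"
proof -
  have "g (f x) = x" if "x \<in> S" for x
    using assms that by (auto simp: homeomorphic_maps_map)
  then show ?thesis by (simp add: image_image)
qed

lemma homeomorphic_maps_image_set_eq:
  assumes "homeomorphic_maps X Y f g"
    and "\<And>S. S \<in> \<A> \<Longrightarrow> f ` S \<in> \<B>" and "\<And>S. S \<in> \<B> \<Longrightarrow> g ` S \<in> \<A>"
    and "\<And>S. S \<in> \<B> \<Longrightarrow> S \<subseteq> topspace Y"
  shows "\<B> = image f ` \<A>"
proof
  show "image f ` \<A> \<subseteq> \<B>" using assms(2) by blast
  show "\<B> \<subseteq> image f ` \<A>"
  proof
    fix S assume S: "S \<in> \<B>"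
    have "S = f ` g ` S"
      using homeomorphic_maps_image_inverse
          [OF homeomorphic_maps_sym[THEN iffD1, OF assms(1)] assms(4)[OF S]]
      by simp
    then show "S \<in> image f ` \<A>" using assms(3)[OF S] by (rule image_eqI)
  qed
qed

lemma homeomorphic_map_image_Diff:
  assumes "homeomorphic_map X Y f" and "S \<subseteq> topspace X"
  shows "topspace Y - f ` S = f ` (topspace X - S)"
proof -
  have "f ` (topspace X - S) = f ` topspace X - f ` S"
    using homeomorphic_imp_injective_map[OF assms(1)] Diff_subset assms(2)
    by (rule inj_on_image_set_diff)
  then show ?thesis by (simp add: homeomorphic_imp_surjective_map[OF assms(1)])
qed

lemma homeomorphic_map_subtopology_Diff:
  assumes "homeomorphic_map X Y f" and "S \<subseteq> topspace X"
  shows "homeomorphic_map (subtopology X (topspace X - S)) (subtopology Y (topspace Y - f ` S)) f"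
proof (rule homeomorphic_map_subtopologies[OF assms(1)])
  show "f ` (topspace X \<inter> (topspace X - S)) = topspace Y \<inter> (topspace Y - f ` S)"
    unfolding Int_absorb1[OF Diff_subset] by (rule homeomorphic_map_image_Diff[OF assms, symmetric])
qed

lemma homeomorphic_map_complement_components:
  assumes "homeomorphic_map X Y f" and "S \<subseteq> topspace X"
  shows "complement_components Y (f ` S) = image f ` complement_components X S"
  using homeomorphic_map_connected_components_of[OF homeomorphic_map_subtopology_Diff[OF assms]] .

lemma homeomorphic_map_connected_space_Diff:
  assumes "homeomorphic_map X Y f" and "S \<subseteq> topspace X"
  shows "connected_space (subtopology Y (topspace Y - f ` S))
     \<longleftrightarrow> connected_space (subtopology X (topspace X - S))"
  using homeomorphic_connected_space[OF homeomorphic_map_imp_homeomorphic_space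
      [OF homeomorphic_map_subtopology_Diff[OF assms]]] by (rule sym)

lemma ecard_image_subsets:
  assumes "inj_on f T" and "\<And>A. A \<in> \<A> \<Longrightarrow> A \<subseteq> T"
  shows "ecard (image f ` \<A>) = ecard \<A>"
proof -
  have "inj_on (image f) \<A>"
  proof (rule inj_onI)
    fix A B assume "A \<in> \<A>" "B \<in> \<A>" "f ` A = f ` B"
    then show "A = B" using inj_on_image_eq_iff[OF assms(1) assms(2) assms(2)] by blast
  qed
  then show ?thesis by (simp add: ecard_def finite_image_iff card_image)
qed

lemma homeomorphic_map_ecard_complement_components:
  assumes "homeomorphic_map X Y f" and "S \<subseteq> topspace X"
  shows "ecard (complement_components Y (f ` S)) = ecard (complement_components X S)"
  unfolding homeomorphic_map_complement_components[OF assms]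
  by (rule ecard_image_subsets[OF homeomorphic_imp_injective_map[OF assms(1)]])
    (rule complement_components_subset_topspace)

lemma homeomorphic_map_noncompact_components:
  assumes H: "homeomorphic_map X Y f" and K: "K \<subseteq> topspace X"
  shows "{C \<in> complement_components Y (f ` K). \<not> compactin Y (Y closure_of C)}
       = image f ` {D \<in> complement_components X K. \<not> compactin X (X closure_of D)}"
proof -
  have "compactin Y (Y closure_of (f ` D)) \<longleftrightarrow> compactin X (X closure_of D)"
    if "D \<in> complement_components X K" for D
  proof -
    from complement_components_subset_topspace[OF that] show ?thesis
      by (simp add: homeomorphic_map_closure_of[OF H] homeomorphic_map_compactness[OF H]
          closure_of_subset_topspace)
  qed
  then show ?thesis unfolding homeomorphic_map_complement_components[OF H K] by auto
qed

lemma num_ends_le_homeomorphic_map: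
  assumes H: "homeomorphic_map X Y f"
  shows "num_ends X \<le> num_ends Y"
  unfolding num_ends_def
proof (rule Sup_subset_mono, safe)
  fix K assume K: "compactin X K"
  then have Ksub: "K \<subseteq> topspace X" by (rule compactin_subset_topspace)
  have "ecard {D \<in> complement_components X K. \<not> compactin X (X closure_of D)}
      = ecard {C \<in> complement_components Y (f ` K). \<not> compactin Y (Y closure_of C)}"
    unfolding homeomorphic_map_noncompact_components[OF H Ksub]
    by (rule ecard_image_subsets[OF homeomorphic_imp_injective_map[OF H], symmetric])
      (blast dest: complement_components_subset_topspace)
  moreover have "compactin Y (f ` K)"
    using K Ksub homeomorphic_map_compactness[OF H] by blast
  ultimately show "\<exists>K'. ecard {D \<in> complement_components X K. \<not> compactin X (X closure_of D)}
      = ecard {C \<in> complement_components Y K'. \<not> compactin Y (Y closure_of C)} \<and> compactin Y K'"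
    by blast
qed

lemma homeomorphic_map_num_ends:
  assumes "homeomorphic_map X Y f"
  shows "num_ends Y = num_ends X"
proof -
  obtain g where "homeomorphic_map Y X g"
    using assms by (metis homeomorphic_map_inverse)
  with assms show ?thesis by (intro antisym num_ends_le_homeomorphic_map)
qed

lemma homeomorphic_map_cut_point:
  assumes H: "homeomorphic_map X Y f" and x: "x \<in> topspace X"
  shows "cut_point Y (f x) \<longleftrightarrow> cut_point X x"
  using homeomorphic_map_connected_space_Diff[OF H, of "{x}"] x
    homeomorphic_imp_surjective_map[OF H]
  unfolding cut_point_def by auto

lemma homeomorphic_map_noncut_point:
  assumes H: "homeomorphic_map X Y f" and x: "x \<in> topspace X"
  shows "noncut_point Y (f x) \<longleftrightarrow> noncut_point X x"
  using homeomorphic_map_cut_point[OF H x] x homeomorphic_imp_surjective_map[OF H]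
  unfolding noncut_point_def by auto

lemma homeomorphic_map_valence:
  assumes H: "homeomorphic_map X Y f" and x: "x \<in> topspace X"
  shows "valence Y (f x) = valence X x"
  using homeomorphic_map_num_ends[OF homeomorphic_map_subtopology_Diff[OF H, of "{x}"]] x
  unfolding valence_def by simp

lemma cut_pair_iff_card:
  "cut_pair X P \<longleftrightarrow> card P = 2 \<and> (\<forall>x\<in>P. noncut_point X x)
     \<and> \<not> connected_space (subtopology X (topspace X - P))"
  unfolding cut_pair_def card_2_iff by blast

lemma cut_pair_subset_topspace: "cut_pair X P \<Longrightarrow> P \<subseteq> topspace X"
  unfolding cut_pair_iff_card noncut_point_def by blast

lemma exact_cut_pair_subset_topspace: "exact_cut_pair X P \<Longrightarrow> P \<subseteq> topspace X"
  unfolding exact_cut_pair_def by (blast dest: cut_pair_subset_topspace)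

lemma homeomorphic_map_cut_pair:
  assumes H: "homeomorphic_map X Y f" and P: "P \<subseteq> topspace X"
  shows "cut_pair Y (f ` P) \<longleftrightarrow> cut_pair X P"
proof -
  have "card (f ` P) = card P"
    using inj_on_subset[OF homeomorphic_imp_injective_map[OF H] P] by (rule card_image)
  moreover have "(\<forall>y\<in>f ` P. noncut_point Y y) \<longleftrightarrow> (\<forall>x\<in>P. noncut_point X x)"
    using homeomorphic_map_noncut_point[OF H] P by auto
  ultimately show ?thesis
    unfolding cut_pair_iff_card homeomorphic_map_connected_space_Diff[OF H P] by simp
qed

lemma homeomorphic_map_exact_cut_pair:
  assumes H: "homeomorphic_map X Y f" and P: "P \<subseteq> topspace X"
  shows "exact_cut_pair Y (f ` P) \<longleftrightarrow> exact_cut_pair X P"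
proof -
  have "\<forall>x\<in>P. valence Y (f x) = valence X x"
    using homeomorphic_map_valence[OF H] P by blast
  then show ?thesis
    unfolding exact_cut_pair_def homeomorphic_map_cut_pair[OF H P]
      homeomorphic_map_ecard_complement_components[OF H P]
    by simp
qed

lemma homeomorphic_map_separates:
  assumes H: "homeomorphic_map X Y f" and S: "S \<subseteq> topspace X"
    and a: "a \<in> topspace X" and b: "b \<in> topspace X"
  shows "separates Y (f ` S) (f a) (f b) \<longleftrightarrow> separates X S a b"
proof -
  have mem: "f z \<in> f ` D \<longleftrightarrow> z \<in> D" if "D \<subseteq> topspace X" and "z \<in> topspace X" for z D
    using inj_on_image_mem_iff[OF homeomorphic_imp_injective_map[OF H] that(2,1)] .
  have "(\<exists>C\<in>complement_components Y (f ` S). f a \<in> C \<and> f b \<in> C)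
      \<longleftrightarrow> (\<exists>D\<in>complement_components X S. f a \<in> f ` D \<and> f b \<in> f ` D)"
    unfolding homeomorphic_map_complement_components[OF H S] by blast
  also have "\<dots> \<longleftrightarrow> (\<exists>D\<in>complement_components X S. a \<in> D \<and> b \<in> D)"
  proof (rule bex_cong[OF refl])
    fix D assume "D \<in> complement_components X S"
    then have "D \<subseteq> topspace X" by (rule complement_components_subset_topspace)
    then show "f a \<in> f ` D \<and> f b \<in> f ` D \<longleftrightarrow> a \<in> D \<and> b \<in> D" using mem a b by simp
  qed
  finally have components: "(\<exists>C\<in>complement_components Y (f ` S). f a \<in> C \<and> f b \<in> C)
      \<longleftrightarrow> (\<exists>D\<in>complement_components X S. a \<in> D \<and> b \<in> D)" .
  have outside: "f z \<in> topspace Y - f ` S \<longleftrightarrow> z \<in> topspace X - S" if "z \<in> topspace X" for z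
    unfolding homeomorphic_map_image_Diff[OF H S] using mem[OF Diff_subset that] .
  show ?thesis
    by (simp only: separates_def components outside[OF a] outside[OF b])
qed

lemma inseparable_exact_cut_pair_reflect:
  assumes H: "homeomorphic_map X Y f" and P: "P \<subseteq> topspace X"
    and insep: "inseparable_exact_cut_pair Y (f ` P)"
  shows "inseparable_exact_cut_pair X P"
  unfolding inseparable_exact_cut_pair_def
proof (intro conjI allI impI notI)
  show "exact_cut_pair X P"
    using insep homeomorphic_map_exact_cut_pair[OF H P]
    unfolding inseparable_exact_cut_pair_def by simp
next
  fix a b assume ab: "P = {a, b}" and "\<exists>Q. exact_cut_pair X Q \<and> Q \<noteq> P \<and> separates X Q a b"
  then obtain Q where Q: "exact_cut_pair X Q" "Q \<noteq> P" "separates X Q a b" by blast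
  have Qsub: "Q \<subseteq> topspace X" by (rule exact_cut_pair_subset_topspace[OF Q(1)])
  have a: "a \<in> topspace X" and b: "b \<in> topspace X" using ab P by auto
  have "exact_cut_pair Y (f ` Q)"
    using Q(1) homeomorphic_map_exact_cut_pair[OF H Qsub] by simp
  moreover have "f ` Q \<noteq> f ` P"
    using Q(2) inj_on_image_eq_iff[OF homeomorphic_imp_injective_map[OF H] Qsub P] by simp
  moreover have "separates Y (f ` Q) (f a) (f b)"
    using Q(3) homeomorphic_map_separates[OF H Qsub a b] by simp
  moreover have "\<not> (\<exists>Q'. exact_cut_pair Y Q' \<and> Q' \<noteq> f ` P \<and> separates Y Q' (f a) (f b))"
    using insep ab unfolding inseparable_exact_cut_pair_def by simp
  ultimately show False by blast
qed

lemma homeomorphic_map_inseparable_exact_cut_pair: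
  assumes H: "homeomorphic_map X Y f" and P: "P \<subseteq> topspace X"
  shows "inseparable_exact_cut_pair Y (f ` P) \<longleftrightarrow> inseparable_exact_cut_pair X P"
proof
  show "inseparable_exact_cut_pair X P" if "inseparable_exact_cut_pair Y (f ` P)"
    using inseparable_exact_cut_pair_reflect[OF H P that] .
next
  obtain g where fg: "homeomorphic_maps X Y f g" and g: "homeomorphic_map Y X g"
    using H by (rule homeomorphic_map_inverse)
  have "f ` P \<subseteq> topspace Y"
    using P homeomorphic_imp_surjective_map[OF H] by blast
  moreover have "g ` f ` P = P"
    by (rule homeomorphic_maps_image_inverse[OF fg P])
  ultimately show "inseparable_exact_cut_pair Y (f ` P)" if "inseparable_exact_cut_pair X P"
    using inseparable_exact_cut_pair_reflect[OF g, of "f ` P"] that by simp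
qed

lemma Zset_subset_topspace: "z \<in> Zset X \<Longrightarrow> z \<subseteq> topspace X"
  unfolding Zset_def inseparable_exact_cut_pair_def cut_point_def
  using exact_cut_pair_subset_topspace by auto

lemma homeomorphic_map_image_in_Zset:
  assumes H: "homeomorphic_map X Y f" and z: "z \<in> Zset X"
  shows "f ` z \<in> Zset Y"
  using z unfolding Zset_def
proof (elim UnE CollectE exE conjE)
  fix \<eta> assume "z = {\<eta>}" and "cut_point X \<eta>"
  then have "f ` z = {f \<eta>}" and "cut_point Y (f \<eta>)"
    using homeomorphic_map_cut_point[OF H] by (auto simp: cut_point_def)
  then show "f ` z \<in> {{\<eta>} |\<eta>. cut_point Y \<eta>} \<union> {P. inseparable_exact_cut_pair Y P}" by blast
next
  assume "inseparable_exact_cut_pair X z"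
  then show "f ` z \<in> {{\<eta>} |\<eta>. cut_point Y \<eta>} \<union> {P. inseparable_exact_cut_pair Y P}"
    using homeomorphic_map_inseparable_exact_cut_pair[OF H Zset_subset_topspace[OF z]] by blast
qed

lemma homeomorphic_map_Zset:
  assumes H: "homeomorphic_map X Y f"
  shows "Zset Y = image f ` Zset X"
proof -
  obtain g where "homeomorphic_maps X Y f g" and "homeomorphic_map Y X g"
    using H by (rule homeomorphic_map_inverse)
  with H show ?thesis
    by (intro homeomorphic_maps_image_set_eq homeomorphic_map_image_in_Zset Zset_subset_topspace)
qed

lemma piece_equiv_in_topspace: "piece_equiv X x y \<Longrightarrow> x \<in> topspace X \<and> y \<in> topspace X"
  unfolding piece_equiv_def by blast

lemma homeomorphic_map_piece_equiv:
  assumes H: "homeomorphic_map X Y f" and x: "x \<in> topspace X" and y: "y \<in> topspace X"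
  shows "piece_equiv Y (f x) (f y) \<longleftrightarrow> piece_equiv X x y"
proof -
  have U: "\<Union>(Zset X) \<subseteq> topspace X" using Zset_subset_topspace by blast
  have "topspace Y - \<Union>(Zset Y) = f ` (topspace X - \<Union>(Zset X))"
    unfolding homeomorphic_map_Zset[OF H] image_Union[symmetric]
    by (rule homeomorphic_map_image_Diff[OF H U])
  then have outside: "f z \<in> topspace Y - \<Union>(Zset Y) \<longleftrightarrow> z \<in> topspace X - \<Union>(Zset X)"
    if "z \<in> topspace X" for z
    using inj_on_image_mem_iff[OF homeomorphic_imp_injective_map[OF H] that Diff_subset] by simp
  have "(\<forall>z\<in>Zset Y. \<not> separates Y z (f x) (f y)) \<longleftrightarrow> (\<forall>z\<in>Zset X. \<not> separates X z x y)"
    unfolding homeomorphic_map_Zset[OF H]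
    using homeomorphic_map_separates[OF H Zset_subset_topspace x y] by simp
  then show ?thesis
    unfolding piece_equiv_def outside[OF x] outside[OF y] by (rule conj_cong[OF refl conj_cong[OF refl]])
qed

lemma homeomorphic_map_piece_class:
  assumes H: "homeomorphic_map X Y f" and x: "x \<in> topspace X"
  shows "{y. piece_equiv Y (f x) y} = f ` {y. piece_equiv X x y}"
proof -
  have "{y. piece_equiv Y (f x) y} = {y \<in> f ` topspace X. piece_equiv Y (f x) y}"
    using piece_equiv_in_topspace[of Y "f x"] homeomorphic_imp_surjective_map[OF H] by auto
  also have "\<dots> = f ` {y \<in> topspace X. piece_equiv Y (f x) (f y)}"
    by blast
  also have "\<dots> = f ` {y \<in> topspace X. piece_equiv X x y}"
    using homeomorphic_map_piece_equiv[OF H x] by (simp cong: conj_cong)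
  also have "\<dots> = f ` {y. piece_equiv X x y}"
    using piece_equiv_in_topspace[of X x] by auto
  finally show ?thesis .
qed

lemma pieces_subset_topspace: "p \<in> pieces X \<Longrightarrow> p \<subseteq> topspace X"
  unfolding pieces_def by (auto simp: in_closure_of)

lemma homeomorphic_map_image_in_pieces:
  assumes H: "homeomorphic_map X Y f" and p: "p \<in> pieces X"
  shows "f ` p \<in> pieces Y"
proof -
  obtain x a b where x: "piece_equiv X x x" and p_eq: "p = X closure_of {y. piece_equiv X x y}"
    and ab: "a \<noteq> b" "piece_equiv X x a" "piece_equiv X x b"
    using p unfolding pieces_def by blast
  have E: "{y. piece_equiv X x y} \<subseteq> topspace X"
    by (auto dest: piece_equiv_in_topspace)
  have xX: "x \<in> topspace X" and abX: "a \<in> topspace X" "b \<in> topspace X"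
    using piece_equiv_in_topspace[OF x] piece_equiv_in_topspace[OF ab(2)]
      piece_equiv_in_topspace[OF ab(3)] by simp_all
  have "f ` p = Y closure_of {y. piece_equiv Y (f x) y}"
    unfolding p_eq homeomorphic_map_piece_class[OF H xX] homeomorphic_map_closure_of[OF H E] ..
  moreover have "piece_equiv Y (f x) (f x)" "piece_equiv Y (f x) (f a)" "piece_equiv Y (f x) (f b)"
    using homeomorphic_map_piece_equiv[OF H xX] x ab abX xX by auto
  moreover have "f a \<noteq> f b"
    using ab(1) abX inj_onD[OF homeomorphic_imp_injective_map[OF H]] by blast
  ultimately show ?thesis
    unfolding pieces_def by blast
qed

lemma homeomorphic_map_pieces:
  assumes H: "homeomorphic_map X Y f"
  shows "pieces Y = image f ` pieces X"
proof -
  obtain g where "homeomorphic_maps X Y f g" and "homeomorphic_map Y X g"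
    using H by (rule homeomorphic_map_inverse)
  with H show ?thesis
    by (intro homeomorphic_maps_image_set_eq homeomorphic_map_image_in_pieces pieces_subset_topspace)
qed

lemma T_vertices_cases:
  assumes "v \<in> T_vertices X"
  obtains S where "S \<subseteq> topspace X" and "v = Inl S" | S where "S \<subseteq> topspace X" and "v = Inr S"
  using assms unfolding T_vertices_def by (auto dest: Zset_subset_topspace pieces_subset_topspace)

lemma T_adj_simps:
  "T_adj X (Inl z) (Inr p) \<longleftrightarrow> Inl z \<in> T_vertices X \<and> Inr p \<in> T_vertices X \<and> z \<subseteq> p"
  "T_adj X (Inr p) (Inl z) \<longleftrightarrow> Inr p \<in> T_vertices X \<and> Inl z \<in> T_vertices X \<and> z \<subseteq> p"
  "\<not> T_adj X (Inl z) (Inl z')" "\<not> T_adj X (Inr p) (Inr p')"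
  unfolding T_adj_def by auto

lemma T_map_comp: "T_map (g \<circ> f) v = T_map g (T_map f v)"
  unfolding T_map_def by (cases v) (simp_all add: image_comp)

lemma T_map_id: "T_map id v = v"
  unfolding T_map_def by (cases v) simp_all

lemma homeomorphic_map_T_vertices:
  assumes H: "homeomorphic_map X Y f"
  shows "T_vertices Y = T_map f ` T_vertices X"
  unfolding T_vertices_def homeomorphic_map_Zset[OF H] homeomorphic_map_pieces[OF H]
  by (simp add: image_Un image_image T_map_def)

lemma homeomorphic_map_T_graph_iso:
  assumes H: "homeomorphic_map X Y f"
  shows "T_graph_iso X Y (T_map f)"
proof -
  have inj: "inj_on f (topspace X)" by (rule homeomorphic_imp_injective_map[OF H])
  have vertices: "T_map f ` T_vertices X = T_vertices Y"
    by (rule homeomorphic_map_T_vertices[OF H, symmetric])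
  have "inj_on (T_map f) (T_vertices X)"
  proof (rule inj_onI)
    fix u v assume "u \<in> T_vertices X" "v \<in> T_vertices X" and "T_map f u = T_map f v"
    then show "u = v"
      by (elim T_vertices_cases) (auto simp: T_map_def inj_on_image_eq_iff[OF inj])
  qed
  moreover have "T_adj X u v \<longleftrightarrow> T_adj Y (T_map f u) (T_map f v)"
    if u: "u \<in> T_vertices X" and v: "v \<in> T_vertices X" for u v
  proof -
    have images: "T_map f u \<in> T_vertices Y" "T_map f v \<in> T_vertices Y"
      using vertices u v by auto
    from u v show ?thesis
      by (elim T_vertices_cases)
        (use u v images in \<open>simp_all add: T_adj_simps T_map_def inj_on_image_subset_iff[OF inj]\<close>)
  qed
  ultimately show ?thesis
    unfolding T_graph_iso_def bij_betw_def using vertices by blast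
qed

theorem corollary1p2:
  fixes M1 :: "'a topology" and M2 :: "'b topology" and M3 :: "'c topology"
  assumes "boundary_like M1" and "boundary_like M2" and "boundary_like M3"
  shows "(\<forall>f. homeomorphic_map M1 M2 f \<longrightarrow> T_graph_iso M1 M2 (T_map f))
       \<and> (\<forall>f1 f2. homeomorphic_map M1 M2 f1 \<and> homeomorphic_map M2 M3 f2 \<longrightarrow>
              (\<forall>v\<in>T_vertices M1. T_map (f2 \<circ> f1) v = T_map f2 (T_map f1 v)))
       \<and> (\<forall>v\<in>T_vertices M1. T_map id v = v)"
  by (simp add: homeomorphic_map_T_graph_iso T_map_comp T_map_id)

end
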